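(* With $Y$, $Y^+$, $X$, $\Delta^+$ as in the context, one has $\gamma_{Y^+/X}(1)=-p\,N_{\Delta^+}\in\mathbb{Z}[\Delta^+]$, where $N_{\Delta^+}=\sum_{\sigma\in\Delta^+}\sigma$.
   Context: Let $p$ be an odd prime, $\Delta=\mathrm{Gal}(\mathbb{Q}(\zeta_p)/\mathbb{Q})$, $\sigma_i:\zeta_p\mapsto\zeta_p^i$, $j=\sigma_{-1}$, $\Delta^+=\Delta/\langle j\rangle$. Digraphs have incidence $e\mapsto(o(e),t(e))$; derived digraph $X(G,\alpha)$ of $\alpha:E_X\to G$ has vertices $V_X\times G$, edges $E_X\times G$, $o(e,\sigma)=(o(e),\sigma)$, $t(e,\sigma)=(t(e),\sigma\alpha(e))$, and $G$ acts by left multiplication on the second coordinate. $X$ is the bouquet (one vertex) with $\frac{p-1}{2}p+1$ loops $e_0$, $e_{i,k}$ ($1\le k\le i\le p-1$), $\alpha(e_0)=\sigma_1$, $\alpha(e_{i,k})=\sigma_i^{-1}$, $Y=X(\Delta,\alpha)$, and $Y^+=Y_{\langle j\rangle}$ the quotient digraph by $\langle j\rangle$, on which $\Delta^+$ acts freely on vertices with quotient $X$. For a finite abelian group $K$ acting on a finite digraph $W$ freely on vertices, $\gamma_{W/W_K}(u)=\det_{\mathbb{Z}[K][u]}(\mathcal{I}-\mathcal{A}_Wu)$ on the free $\mathbb{Z}[K][u]$-module $\mathbb{Z}V_W[u]$, where $\mathcal{A}_W(w)=\sum_{o(\varepsilon)=w}t(\varepsilon)$. *)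

theory Defs
  imports "HOL-Algebra.Algebra" "HOL-Combinatorics.Permutations"
begin

record ('v, 'e) digraph =
  verts :: "'v set"
  arcs  :: "'e set"
  orig  :: "'e \<Rightarrow> 'v"
  targ  :: "'e \<Rightarrow> 'v"

definition derived_digraph ::
  "('v, 'e) digraph \<Rightarrow> ('g, 'b) monoid_scheme \<Rightarrow> ('e \<Rightarrow> 'g) \<Rightarrow> ('v \<times> 'g, 'e \<times> 'g) digraph" where
  "derived_digraph Xg G \<alpha> =
     \<lparr> verts = verts Xg \<times> carrier G,
       arcs = arcs Xg \<times> carrier G,
       orig = (\<lambda>(e, s). (orig Xg e, s)),
       targ = (\<lambda>(e, s). (targ Xg e, monoid.mult G s (\<alpha> e))) \<rparr>"

definition derived_act :: "('g, 'b) monoid_scheme \<Rightarrow> 'g \<Rightarrow> 'x \<times> 'g \<Rightarrow> 'x \<times> 'g" where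
  "derived_act G g = (\<lambda>(x, s). (x, monoid.mult G g s))"

definition orbit_of :: "'g set \<Rightarrow> ('g \<Rightarrow> 'x \<Rightarrow> 'x) \<Rightarrow> 'x \<Rightarrow> 'x set" where
  "orbit_of H act x = (\<lambda>h. act h x) ` H"

definition quotient_digraph ::
  "('v, 'e) digraph \<Rightarrow> 'g set \<Rightarrow> ('g \<Rightarrow> 'v \<Rightarrow> 'v) \<Rightarrow> ('g \<Rightarrow> 'e \<Rightarrow> 'e) \<Rightarrow> ('v set, 'e set) digraph" where
  "quotient_digraph W H actv acte =
     \<lparr> verts = orbit_of H actv ` verts W,
       arcs = orbit_of H acte ` arcs W,
       orig = (\<lambda>E. orbit_of H actv (orig W (SOME \<epsilon>. \<epsilon> \<in> E))),
       targ = (\<lambda>E. orbit_of H actv (targ W (SOME \<epsilon>. \<epsilon> \<in> E))) \<rparr>"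

text \<open>Induced action of a coset C (element of G/H) on an H-orbit O.\<close>
definition coset_act :: "('g \<Rightarrow> 'x \<Rightarrow> 'x) \<Rightarrow> 'g set \<Rightarrow> 'x set \<Rightarrow> 'x set" where
  "coset_act act C Orb = (\<lambda>(c, x). act c x) ` (C \<times> Orb)"

definition group_ring :: "('k, 'b) monoid_scheme \<Rightarrow> ('k \<Rightarrow> int) ring" where
  "group_ring K =
     \<lparr> carrier = {f. \<forall>x. x \<notin> carrier K \<longrightarrow> f x = 0},
       monoid.mult = (\<lambda>f g x. if x \<in> carrier K
                        then (\<Sum>y\<in>carrier K. f y * g (monoid.mult K (m_inv K y) x)) else 0),
       one = (\<lambda>x. if x = one K then 1 else 0),
       ring.zero = (\<lambda>x. 0),
       ring.add = (\<lambda>f g x. f x + g x) \<rparr>"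

definition det_ring :: "('a, 'm) ring_scheme \<Rightarrow> 'i set \<Rightarrow> ('i \<Rightarrow> 'i \<Rightarrow> 'a) \<Rightarrow> 'a" where
  "det_ring R I M =
     finsum R (\<lambda>\<pi>. if evenperm \<pi> then finprod R (\<lambda>i. M i (\<pi> i)) I
                    else a_inv R (finprod R (\<lambda>i. M i (\<pi> i)) I))
       {\<pi>. \<pi> permutes I}"

text \<open>Orbit representatives of the K-action on the vertices of W: a basis of the free
  Z[K][u]-module Z V_W[u].\<close>
definition orbit_reps :: "('k, 'b) monoid_scheme \<Rightarrow> ('k \<Rightarrow> 'v \<Rightarrow> 'v) \<Rightarrow> ('v, 'e) digraph \<Rightarrow> 'v set" where
  "orbit_reps K act W = (\<lambda>Orb. SOME v. v \<in> Orb) ` (orbit_of (carrier K) act ` verts W)"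

text \<open>Coefficient of the basis element r' in A_W(r), an element of Z[K]:
  A_W(r) = sum over edges with o(e) = r of t(e), and t(e) = k . r'.\<close>
definition adj_coeff :: "('k, 'b) monoid_scheme \<Rightarrow> ('k \<Rightarrow> 'v \<Rightarrow> 'v) \<Rightarrow> ('v, 'e) digraph
    \<Rightarrow> 'v \<Rightarrow> 'v \<Rightarrow> ('k \<Rightarrow> int)" where
  "adj_coeff K act W r r' =
     (\<lambda>k. if k \<in> carrier K
          then int (card {\<epsilon> \<in> arcs W. orig W \<epsilon> = r \<and> targ W \<epsilon> = act k r'}) else 0)"

definition gamma :: "('k, 'b) monoid_scheme \<Rightarrow> ('k \<Rightarrow> 'v \<Rightarrow> 'v) \<Rightarrow> ('v, 'e) digraph
    \<Rightarrow> (nat \<Rightarrow> ('k \<Rightarrow> int))" where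
  "gamma K act W =
     (let ZK = group_ring K; P = UP ZK; R = orbit_reps K act W in
      det_ring P R (\<lambda>r r'. a_minus P (if r = r' then one P else ring.zero P)
                            (monom P (adj_coeff K act W r r') 1)))"

definition gamma_at_1 :: "('k, 'b) monoid_scheme \<Rightarrow> ('k \<Rightarrow> 'v \<Rightarrow> 'v) \<Rightarrow> ('v, 'e) digraph
    \<Rightarrow> ('k \<Rightarrow> int)" where
  "gamma_at_1 K act W = eval (group_ring K) (group_ring K) id (one (group_ring K)) (gamma K act W)"

text \<open>Delta = Gal(Q(zeta_p)/Q), with sigma_i represented by i in {1..p-1}
  (sigma_i sigma_k = sigma_{ik mod p}).\<close>
definition Delta :: "nat \<Rightarrow> nat monoid" where
  "Delta p = \<lparr> carrier = {1..p - 1}, monoid.mult = (\<lambda>a b. (a * b) mod p), one = 1 \<rparr>"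

text \<open>j = sigma_{-1}\<close>
definition jay :: "nat \<Rightarrow> nat" where "jay p = p - 1"

definition Delta_plus :: "nat \<Rightarrow> nat set monoid" where
  "Delta_plus p = Delta p Mod {1, jay p}"

text \<open>The bouquet X: one vertex, loops e_0 = None and e_{i,k} = Some (i,k), 1 <= k <= i <= p-1.\<close>
definition Xb :: "nat \<Rightarrow> (unit, (nat \<times> nat) option) digraph" where
  "Xb p = \<lparr> verts = {()},
            arcs = {None} \<union> Some ` {(i, k). 1 \<le> k \<and> k \<le> i \<and> i \<le> p - 1},
            orig = (\<lambda>_. ()), targ = (\<lambda>_. ()) \<rparr>"

definition alpha :: "nat \<Rightarrow> (nat \<times> nat) option \<Rightarrow> nat" where
  "alpha p e = (case e of None \<Rightarrow> 1 | Some (i, k) \<Rightarrow> m_inv (Delta p) i)"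

definition Yd :: "nat \<Rightarrow> (unit \<times> nat, (nat \<times> nat) option \<times> nat) digraph" where
  "Yd p = derived_digraph (Xb p) (Delta p) (alpha p)"

definition Yplus :: "nat \<Rightarrow> ((unit \<times> nat) set, ((nat \<times> nat) option \<times> nat) set) digraph" where
  "Yplus p = quotient_digraph (Yd p) {1, jay p} (derived_act (Delta p)) (derived_act (Delta p))"

definition Yplus_act :: "nat \<Rightarrow> nat set \<Rightarrow> (unit \<times> nat) set \<Rightarrow> (unit \<times> nat) set" where
  "Yplus_act p = coset_act (derived_act (Delta p))"

definition norm_elt :: "('k, 'b) monoid_scheme \<Rightarrow> ('k \<Rightarrow> int)" where
  "norm_elt K = (\<lambda>x. if x \<in> carrier K then 1 else 0)"

end

theory Submission
  imports Defs "HOL-Number_Theory.Cong"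
begin

text \<open>The vertices of \<open>Y\<^sup>+\<close> are the \<open>\<langle>j\<rangle>\<close>-cosets of \<open>\<Delta>\<close>, permuted transitively by
  \<open>\<Delta>\<^sup>+\<close>, so \<open>\<gamma>\<^bsub>Y\<^sup>+/X\<^esub>(u)\<close> is the 1\<times>1 determinant \<open>1 - a u\<close>, where the coefficient
  of \<open>\<tau> \<in> \<Delta>\<^sup>+\<close> in \<open>a\<close> is the number of loops of \<open>X\<close> whose voltage lies in \<open>\<tau>\<close>.
  The loop \<open>e\<^sub>0\<close> lies over the identity; over the class of \<open>\<sigma>\<^sub>c\<close> lie the loops
  \<open>e\<^sub>i\<^sub>,\<^sub>k\<close> with \<open>i \<in> {d, p - d}\<close> for \<open>\<sigma>\<^sub>d = \<sigma>\<^sub>c\<^sup>-\<^sup>1\<close>, and there are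
  \<open>d + (p - d) = p\<close> of them. Hence \<open>a = 1 + p N\<close> and \<open>\<gamma>(1) = 1 - a = -p N\<close>.\<close>

section \<open>The group ring\<close>

lemma group_ring_simps:
  "carrier (group_ring K) = {f. \<forall>x. x \<notin> carrier K \<longrightarrow> f x = 0}"
  "f \<otimes>\<^bsub>group_ring K\<^esub> g = (\<lambda>x. if x \<in> carrier K
      then (\<Sum>y\<in>carrier K. f y * g (inv\<^bsub>K\<^esub> y \<otimes>\<^bsub>K\<^esub> x)) else 0)"
  "\<one>\<^bsub>group_ring K\<^esub> = (\<lambda>x. if x = \<one>\<^bsub>K\<^esub> then 1 else 0)"
  "\<zero>\<^bsub>group_ring K\<^esub> = (\<lambda>x. 0)"
  "f \<oplus>\<^bsub>group_ring K\<^esub> g = (\<lambda>x. f x + g x)"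
  by (simp_all add: group_ring_def)

context group
begin

lemma bij_betw_inv_mult: "x \<in> carrier G \<Longrightarrow> bij_betw (\<lambda>w. inv w \<otimes> x) (carrier G) (carrier G)"
  by (rule bij_betwI[where g="\<lambda>w. inv (w \<otimes> inv x)"]) (auto simp: m_assoc inv_mult_group)

lemma group_ring_one_mult:
  assumes "finite (carrier G)" "f \<in> carrier (group_ring G)"
  shows "\<one>\<^bsub>group_ring G\<^esub> \<otimes>\<^bsub>group_ring G\<^esub> f = f"
proof
  fix x
  show "(\<one>\<^bsub>group_ring G\<^esub> \<otimes>\<^bsub>group_ring G\<^esub> f) x = f x"
  proof (cases "x \<in> carrier G")
    case True
    have "(\<Sum>y\<in>carrier G. (if y = \<one> then 1 else 0) * f (inv y \<otimes> x))
        = (\<Sum>y\<in>carrier G. if y = \<one> then f (inv y \<otimes> x) else 0)"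
      by (rule sum.cong) auto
    also have "\<dots> = f x" using True assms(1) by (simp add: sum.delta)
    finally show ?thesis using True by (simp add: group_ring_simps)
  qed (use assms(2) in \<open>auto simp: group_ring_simps\<close>)
qed

lemma group_ring_mult_assoc:
  "f \<otimes>\<^bsub>group_ring G\<^esub> g \<otimes>\<^bsub>group_ring G\<^esub> h = f \<otimes>\<^bsub>group_ring G\<^esub> (g \<otimes>\<^bsub>group_ring G\<^esub> h)"
proof
  fix x
  show "(f \<otimes>\<^bsub>group_ring G\<^esub> g \<otimes>\<^bsub>group_ring G\<^esub> h) x = (f \<otimes>\<^bsub>group_ring G\<^esub> (g \<otimes>\<^bsub>group_ring G\<^esub> h)) x"
  proof (cases "x \<in> carrier G")
    case x: True
    have inner: "(\<Sum>y\<in>carrier G. g (inv z \<otimes> y) * h (inv y \<otimes> x))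
               = (\<Sum>w\<in>carrier G. g w * h (inv w \<otimes> (inv z \<otimes> x)))" if z: "z \<in> carrier G" for z
    proof -
      have "(\<Sum>y\<in>carrier G. g (inv z \<otimes> y) * h (inv y \<otimes> x))
          = (\<Sum>w\<in>carrier G. g (inv z \<otimes> (z \<otimes> w)) * h (inv (z \<otimes> w) \<otimes> x))"
        using bij_betw_imageI[OF inj_on_cmult[OF z] surj_const_mult[OF z]]
        by (rule sum.reindex_bij_betw[symmetric])
      also have "\<dots> = (\<Sum>w\<in>carrier G. g w * h (inv w \<otimes> (inv z \<otimes> x)))"
      proof (rule sum.cong)
        fix w assume w: "w \<in> carrier G"
        have "inv z \<otimes> (z \<otimes> w) = w" using z w by (simp add: m_assoc[symmetric])
        moreover have "inv (z \<otimes> w) \<otimes> x = inv w \<otimes> (inv z \<otimes> x)"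
          using z w x by (simp add: inv_mult_group m_assoc)
        ultimately show "g (inv z \<otimes> (z \<otimes> w)) * h (inv (z \<otimes> w) \<otimes> x)
            = g w * h (inv w \<otimes> (inv z \<otimes> x))" by simp
      qed simp
      finally show ?thesis .
    qed
    have "(\<Sum>y\<in>carrier G. (\<Sum>z\<in>carrier G. f z * g (inv z \<otimes> y)) * h (inv y \<otimes> x))
        = (\<Sum>y\<in>carrier G. \<Sum>z\<in>carrier G. f z * (g (inv z \<otimes> y) * h (inv y \<otimes> x)))"
      by (simp add: sum_distrib_right mult.assoc)
    also have "\<dots> = (\<Sum>z\<in>carrier G. f z * (\<Sum>y\<in>carrier G. g (inv z \<otimes> y) * h (inv y \<otimes> x)))"
      by (subst sum.swap) (simp add: sum_distrib_left)
    also have "\<dots> = (\<Sum>z\<in>carrier G. f z * (\<Sum>w\<in>carrier G. g w * h (inv w \<otimes> (inv z \<otimes> x))))"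
      using inner by simp
    finally show ?thesis using x by (simp add: group_ring_simps)
  qed (simp add: group_ring_simps)
qed

end

lemma (in comm_group) group_ring_mult_comm:
  "f \<otimes>\<^bsub>group_ring G\<^esub> g = g \<otimes>\<^bsub>group_ring G\<^esub> f"
proof
  fix x
  show "(f \<otimes>\<^bsub>group_ring G\<^esub> g) x = (g \<otimes>\<^bsub>group_ring G\<^esub> f) x"
  proof (cases "x \<in> carrier G")
    case x: True
    have "(\<Sum>y\<in>carrier G. g y * f (inv y \<otimes> x))
        = (\<Sum>w\<in>carrier G. g (inv w \<otimes> x) * f (inv (inv w \<otimes> x) \<otimes> x))"
      by (rule sum.reindex_bij_betw[OF bij_betw_inv_mult[OF x], symmetric])
    also have "\<dots> = (\<Sum>w\<in>carrier G. f w * g (inv w \<otimes> x))"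
    proof (rule sum.cong)
      fix w assume w: "w \<in> carrier G"
      have "inv (inv w \<otimes> x) \<otimes> x = w"
      proof -
        have "inv x \<otimes> (w \<otimes> x) = w \<otimes> (inv x \<otimes> x)" using w x by (simp add: m_lcomm)
        then show ?thesis using w x by (simp add: inv_mult_group m_assoc)
      qed
      then show "g (inv w \<otimes> x) * f (inv (inv w \<otimes> x) \<otimes> x) = f w * g (inv w \<otimes> x)"
        by simp
    qed simp
    finally show ?thesis using x by (simp add: group_ring_simps)
  qed (simp add: group_ring_simps)
qed

lemma (in comm_group) cring_group_ring:
  assumes "finite (carrier G)"
  shows "cring (group_ring G)"
proof (rule cringI)
  show "abelian_group (group_ring G)"
  proof (rule abelian_groupI)
    fix f assume "f \<in> carrier (group_ring G)"
    then show "\<exists>y\<in>carrier (group_ring G). y \<oplus>\<^bsub>group_ring G\<^esub> f = \<zero>\<^bsub>group_ring G\<^esub>"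
      by (intro bexI[where x="\<lambda>x. - f x"]) (auto simp: group_ring_simps)
  qed (auto simp: group_ring_simps)
  show "Group.comm_monoid (group_ring G)"
    using group_ring_one_mult[OF assms] group_ring_mult_assoc group_ring_mult_comm
    by (intro comm_monoidI) (auto simp: group_ring_simps)
qed (auto simp: group_ring_simps distrib_right sum.distrib)

lemma (in comm_group) group_ring_minus:
  assumes "finite (carrier G)" "f \<in> carrier (group_ring G)" "g \<in> carrier (group_ring G)"
  shows "f \<ominus>\<^bsub>group_ring G\<^esub> g = (\<lambda>x. f x - g x)"
proof -
  interpret R: cring "group_ring G" by (rule cring_group_ring[OF assms(1)])
  have "\<ominus>\<^bsub>group_ring G\<^esub> g = (\<lambda>x. - g x)"
    by (rule R.minus_equality) (use assms in \<open>auto simp: group_ring_simps\<close>)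
  then show ?thesis by (simp add: a_minus_def group_ring_simps)
qed

section \<open>The polynomial \<open>\<gamma>\<close> for a single vertex orbit\<close>

lemma (in cring) det_ring_singleton:
  assumes "M r r \<in> carrier R"
  shows "det_ring R {r} M = M r r"
proof -
  have "{\<pi>. \<pi> permutes {r}} = {id}" by (auto simp: permutes_sing)
  then show ?thesis using assms by (simp add: det_ring_def evenperm_id)
qed

lemma (in cring) eval_at_one_one_minus_monom:
  assumes a: "a \<in> carrier R"
  shows "UnivPoly.eval R R id \<one> (\<one>\<^bsub>UP R\<^esub> \<ominus>\<^bsub>UP R\<^esub> up_ring.monom (UP R) a 1) = \<one> \<ominus> a"
proof -
  interpret UP_pre_univ_prop R R id "UP R"
    by unfold_locales (simp_all add: is_cring id_ring_hom)
  interpret E: ring_hom_cring "UP R" R "UnivPoly.eval R R id \<one>"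
    by unfold_locales (simp add: eval_ring_hom)
  have "up_ring.monom (UP R) a 1 \<in> carrier (UP R)" using a by simp
  then have "UnivPoly.eval R R id \<one> (\<one>\<^bsub>UP R\<^esub> \<ominus>\<^bsub>UP R\<^esub> up_ring.monom (UP R) a 1)
      = \<one> \<ominus> UnivPoly.eval R R id \<one> (up_ring.monom (UP R) a 1)"
    by (simp add: E.hom_sub)
  also have "\<dots> = \<one> \<ominus> a"
    using eval_monom[of a \<one> 1] a by simp
  finally show ?thesis .
qed

lemma orbit_reps_transitive:
  assumes "v \<in> verts W" and "\<And>w. w \<in> verts W \<Longrightarrow> orbit_of (carrier K) act w = verts W"
  shows "\<exists>r\<in>verts W. orbit_reps K act W = {r}"
proof -
  have "orbit_of (carrier K) act ` verts W = {verts W}" using assms by auto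
  then have "orbit_reps K act W = {SOME r. r \<in> verts W}" by (simp add: orbit_reps_def)
  moreover have "(SOME r. r \<in> verts W) \<in> verts W" using assms(1) by (rule someI)
  ultimately show ?thesis by blast
qed

lemma gamma_at_1_single_orbit:
  assumes "comm_group K" "finite (carrier K)" "orbit_reps K act W = {r}"
  shows "gamma_at_1 K act W = (\<lambda>x. (if x = \<one>\<^bsub>K\<^esub> then 1 else 0) - adj_coeff K act W r r x)"
proof -
  interpret K: comm_group K by fact
  interpret R: cring "group_ring K" by (rule K.cring_group_ring[OF assms(2)])
  interpret U: UP_cring "group_ring K" "UP (group_ring K)" by unfold_locales simp
  let ?a = "adj_coeff K act W r r"
  have a: "?a \<in> carrier (group_ring K)" by (simp add: group_ring_simps adj_coeff_def)
  have "gamma K act W = \<one>\<^bsub>UP (group_ring K)\<^esub> \<ominus>\<^bsub>UP (group_ring K)\<^esub> monom (UP (group_ring K)) ?a 1"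
    unfolding gamma_def Let_def assms(3) using a
    by (subst cring.det_ring_singleton[OF U.UP_cring]) (simp_all add: U.P.minus_closed)
  then have "gamma_at_1 K act W = \<one>\<^bsub>group_ring K\<^esub> \<ominus>\<^bsub>group_ring K\<^esub> ?a"
    unfolding gamma_at_1_def using R.eval_at_one_one_minus_monom[OF a] by simp
  also have "\<dots> = (\<lambda>x. (if x = \<one>\<^bsub>K\<^esub> then 1 else 0) - ?a x)"
    using a by (subst K.group_ring_minus[OF assms(2)]) (auto simp: group_ring_simps)
  finally show ?thesis .
qed

section \<open>Quotients of derived digraphs\<close>

lemma (in group) rcos_eq_iff_mem:
  assumes "subgroup H G" "x \<in> carrier G" "y \<in> carrier G"
  shows "H #> x = H #> y \<longleftrightarrow> x \<in> H #> y"
  using assms rcos_self[of x H] repr_independence[of x H y] by auto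

lemma (in group) rcos_mult_right_cancel:
  assumes "H \<subseteq> carrier G" "a \<in> carrier G" "c \<in> carrier G" "s \<in> carrier G"
  shows "H #> (a \<otimes> s) = H #> (c \<otimes> s) \<longleftrightarrow> H #> a = H #> c"
proof
  assume eq: "H #> (a \<otimes> s) = H #> (c \<otimes> s)"
  have "H #> a = H #> (a \<otimes> s) #> inv s"
    using assms by (simp add: coset_mult_assoc m_assoc)
  also have "\<dots> = H #> (c \<otimes> s) #> inv s" by (simp only: eq)
  also have "\<dots> = H #> c"
    using assms by (simp add: coset_mult_assoc m_assoc)
  finally show "H #> a = H #> c" .
qed (use assms in \<open>simp add: coset_mult_assoc[symmetric]\<close>)

lemma (in comm_group) rcos_inv_eq_iff:
  assumes H: "subgroup H G" and a: "a \<in> carrier G" and b: "b \<in> carrier G"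
  shows "H #> inv a = H #> b \<longleftrightarrow> a \<in> H #> inv b"
proof -
  interpret subgroup H G by (rule H)
  have "H #> inv a = H #> b \<longleftrightarrow> inv a \<otimes> inv b \<in> H"
    using rcos_eq_iff_mem[OF H] rcos_module[OF is_group] a b by simp
  also have "\<dots> \<longleftrightarrow> a \<otimes> b \<in> H"
  proof
    assume "inv a \<otimes> inv b \<in> H"
    then have "inv (inv a \<otimes> inv b) \<in> H" by (rule m_inv_closed)
    then show "a \<otimes> b \<in> H" using a b by (simp add: inv_mult)
  next
    assume "a \<otimes> b \<in> H"
    then have "inv (a \<otimes> b) \<in> H" by (rule m_inv_closed)
    then show "inv a \<otimes> inv b \<in> H" using a b by (simp add: inv_mult m_comm)
  qed
  also have "\<dots> \<longleftrightarrow> a \<in> H #> inv b"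
    using rcos_module[OF is_group] a b by simp
  finally show ?thesis .
qed

lemma orbit_of_derived_act: "orbit_of H (derived_act G) = (\<lambda>(x, s). {x} \<times> (H #>\<^bsub>G\<^esub> s))"
  unfolding orbit_of_def derived_act_def r_coset_def by fastforce

locale derived_quotient = comm_group G for G (structure) +
  fixes H :: "'a set" and D :: "('v, 'e) digraph" and \<alpha> :: "'e \<Rightarrow> 'a"
  assumes subgroup_H: "subgroup H G"
    and voltage_closed: "e \<in> arcs D \<Longrightarrow> \<alpha> e \<in> carrier G"
begin

abbreviation YH :: "(('v \<times> 'a) set, ('e \<times> 'a) set) digraph" where
  "YH \<equiv> quotient_digraph (derived_digraph D G \<alpha>) H (derived_act G) (derived_act G)"

abbreviation H_orbit :: "'x \<Rightarrow> 'a \<Rightarrow> ('x \<times> 'a) set" where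
  "H_orbit x s \<equiv> {x} \<times> (H #> s)"

lemma H_subset: "H \<subseteq> carrier G"
  using subgroup_H by (rule subgroup.subset)

lemma H_orbit_eq_iff:
  assumes "s \<in> carrier G" "t \<in> carrier G"
  shows "H_orbit x s = H_orbit y t \<longleftrightarrow> x = y \<and> H #> s = H #> t"
  using rcos_self[OF assms(1) subgroup_H] rcos_self[OF assms(2) subgroup_H] by blast

lemma verts_YH: "verts YH = (\<lambda>(v, s). H_orbit v s) ` (verts D \<times> carrier G)"
  by (auto simp: quotient_digraph_def derived_digraph_def orbit_of_derived_act)

lemma arcs_YH: "arcs YH = (\<lambda>(e, s). H_orbit e s) ` (arcs D \<times> carrier G)"
  by (auto simp: quotient_digraph_def derived_digraph_def orbit_of_derived_act)

text \<open>The incidence of the quotient digraph is computed at an arbitrary (SOME) representative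
  of the edge orbit; any choice has the same coset.\<close>
lemma some_in_H_orbit:
  assumes "s \<in> carrier G"
  obtains t where "(SOME \<epsilon>. \<epsilon> \<in> H_orbit e s) = (e, t)" "t \<in> carrier G" "H #> t = H #> s"
proof -
  have "(e, s) \<in> H_orbit e s" using rcos_self[OF assms subgroup_H] by simp
  then have "(SOME \<epsilon>. \<epsilon> \<in> H_orbit e s) \<in> H_orbit e s" by (rule someI)
  then obtain t where "(SOME \<epsilon>. \<epsilon> \<in> H_orbit e s) = (e, t)" and t: "t \<in> H #> s" by auto
  moreover have "t \<in> carrier G" using t r_coset_subset_G[OF H_subset assms] by blast
  moreover have "H #> t = H #> s" using t repr_independence[OF _ assms subgroup_H] by metis
  ultimately show ?thesis using that by blast
qed

lemma orig_YH:
  assumes "s \<in> carrier G"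
  shows "orig YH (H_orbit e s) = H_orbit (orig D e) s"
proof -
  obtain t where "(SOME \<epsilon>. \<epsilon> \<in> H_orbit e s) = (e, t)" "H #> t = H #> s"
    using some_in_H_orbit[OF assms] .
  then show ?thesis
    by (simp add: quotient_digraph_def derived_digraph_def orbit_of_derived_act)
qed

lemma targ_YH:
  assumes "e \<in> arcs D" "s \<in> carrier G"
  shows "targ YH (H_orbit e s) = H_orbit (targ D e) (s \<otimes> \<alpha> e)"
proof -
  obtain t where t: "(SOME \<epsilon>. \<epsilon> \<in> H_orbit e s) = (e, t)" "t \<in> carrier G" "H #> t = H #> s"
    using some_in_H_orbit[OF assms(2)] .
  have "H #> (t \<otimes> \<alpha> e) = H #> (s \<otimes> \<alpha> e)"
    using t(2,3) assms voltage_closed coset_mult_assoc[OF H_subset] by metis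
  with t(1) show ?thesis
    by (simp add: quotient_digraph_def derived_digraph_def orbit_of_derived_act)
qed

lemma coset_act_H_orbit:
  assumes "c \<in> carrier G" "s \<in> carrier G"
  shows "coset_act (derived_act G) (H #> c) (H_orbit x s) = H_orbit x (c \<otimes> s)"
proof -
  have "coset_act (derived_act G) (H #> c) (H_orbit x s) = {x} \<times> ((H #> c) <#> (H #> s))"
    unfolding coset_act_def derived_act_def set_mult_def by force
  then show ?thesis
    using normal.rcos_sum[OF subgroup_imp_normal[OF subgroup_H] assms] by simp
qed

lemma orbit_of_H_orbit:
  assumes "s \<in> carrier G"
  shows "orbit_of (carrier (G Mod H)) (coset_act (derived_act G)) (H_orbit x s)
       = (\<lambda>t. H_orbit x t) ` carrier G"
proof -
  have "orbit_of (carrier (G Mod H)) (coset_act (derived_act G)) (H_orbit x s)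
      = (\<lambda>c. H_orbit x (c \<otimes> s)) ` carrier G"
    unfolding orbit_of_def carrier_FactGroup image_image
    by (rule image_cong) (simp_all add: coset_act_H_orbit assms)
  also have "\<dots> = (\<lambda>t. H_orbit x t) ` ((\<lambda>c. s \<otimes> c) ` carrier G)"
    by (simp add: image_image m_comm assms)
  also have "\<dots> = (\<lambda>t. H_orbit x t) ` carrier G"
    by (simp add: surj_const_mult assms)
  finally show ?thesis .
qed

lemma arcs_YH_between:
  assumes s: "s \<in> carrier G" and c: "c \<in> carrier G"
  shows "{E \<in> arcs YH. orig YH E = H_orbit v s \<and> targ YH E = H_orbit v' (c \<otimes> s)}
       = (\<lambda>e. H_orbit e s) ` {e \<in> arcs D. orig D e = v \<and> targ D e = v' \<and> H #> \<alpha> e = H #> c}"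
proof -
  have targ_iff: "targ YH (H_orbit e s) = H_orbit v' (c \<otimes> s)
      \<longleftrightarrow> targ D e = v' \<and> H #> \<alpha> e = H #> c" if e: "e \<in> arcs D" for e
    using targ_YH[OF e s] voltage_closed[OF e] s c
      H_orbit_eq_iff[OF m_closed[OF s voltage_closed[OF e]] m_closed[OF c s]]
      rcos_mult_right_cancel[OF H_subset voltage_closed[OF e] c s]
    by (simp add: m_comm[of s])
  show ?thesis
  proof (intro equalityI subsetI)
    fix E assume "E \<in> {E \<in> arcs YH. orig YH E = H_orbit v s \<and> targ YH E = H_orbit v' (c \<otimes> s)}"
    then obtain e t where e: "e \<in> arcs D" and t: "t \<in> carrier G" and E: "E = H_orbit e t"
      and o: "orig YH E = H_orbit v s" and tg: "targ YH E = H_orbit v' (c \<otimes> s)"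
      unfolding arcs_YH by auto
    from o have "H_orbit (orig D e) t = H_orbit v s" using orig_YH[OF t] E by simp
    then have "orig D e = v \<and> H #> t = H #> s" by (rule H_orbit_eq_iff[OF t s, THEN iffD1])
    with E have "E = H_orbit e s" "orig D e = v" by simp_all
    with e tg targ_iff[OF e]
    show "E \<in> (\<lambda>e. H_orbit e s) ` {e \<in> arcs D. orig D e = v \<and> targ D e = v' \<and> H #> \<alpha> e = H #> c}"
      by auto
  next
    fix E assume "E \<in> (\<lambda>e. H_orbit e s) ` {e \<in> arcs D. orig D e = v \<and> targ D e = v' \<and> H #> \<alpha> e = H #> c}"
    then obtain e where "e \<in> arcs D" "orig D e = v" "targ D e = v'" "H #> \<alpha> e = H #> c"
      and "E = H_orbit e s" by auto
    then show "E \<in> {E \<in> arcs YH. orig YH E = H_orbit v s \<and> targ YH E = H_orbit v' (c \<otimes> s)}"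
      using s targ_iff orig_YH[OF s] unfolding arcs_YH by auto
  qed
qed

lemma adj_coeff_YH:
  assumes s: "s \<in> carrier G" and c: "c \<in> carrier G"
  shows "adj_coeff (G Mod H) (coset_act (derived_act G)) YH (H_orbit v s) (H_orbit v' s) (H #> c)
       = int (card {e \<in> arcs D. orig D e = v \<and> targ D e = v' \<and> H #> \<alpha> e = H #> c})"
proof -
  have "inj_on (\<lambda>e. H_orbit e s) A" for A :: "'e set"
    using rcos_self[OF s subgroup_H] by (auto simp: inj_on_def)
  then have "card {E \<in> arcs YH. orig YH E = H_orbit v s \<and> targ YH E = H_orbit v' (c \<otimes> s)}
      = card {e \<in> arcs D. orig D e = v \<and> targ D e = v' \<and> H #> \<alpha> e = H #> c}"
    by (simp add: arcs_YH_between[OF s c] card_image)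
  moreover have "H #> c \<in> carrier (G Mod H)" using c by (auto simp: carrier_FactGroup)
  ultimately show ?thesis by (simp add: adj_coeff_def coset_act_H_orbit[OF c s])
qed

theorem gamma_at_1_bouquet:
  assumes fin: "finite (carrier G)" and bouquet: "verts D = {v}" "\<And>e. orig D e = v" "\<And>e. targ D e = v"
  shows "gamma_at_1 (G Mod H) (coset_act (derived_act G)) YH
       = (\<lambda>x. if x \<in> carrier (G Mod H)
              then (if x = H then 1 else 0) - int (card {e \<in> arcs D. H #> \<alpha> e = x}) else 0)"
proof -
  interpret normal H G by (rule subgroup_imp_normal[OF subgroup_H])
  have "\<exists>r\<in>verts YH. orbit_reps (G Mod H) (coset_act (derived_act G)) YH = {r}"
    by (rule orbit_reps_transitive) (auto simp: verts_YH bouquet orbit_of_H_orbit)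
  then obtain s where s: "s \<in> carrier G"
    and reps: "orbit_reps (G Mod H) (coset_act (derived_act G)) YH = {H_orbit v s}"
    unfolding verts_YH bouquet by auto
  have "comm_group (G Mod H)" by (rule abelian_FactGroup[OF subgroup_H])
  moreover have "finite (carrier (G Mod H))" using fin by (simp add: carrier_FactGroup)
  ultimately have gamma: "gamma_at_1 (G Mod H) (coset_act (derived_act G)) YH
      = (\<lambda>x. (if x = H then 1 else 0)
             - adj_coeff (G Mod H) (coset_act (derived_act G)) YH (H_orbit v s) (H_orbit v s) x)"
    using gamma_at_1_single_orbit[OF _ _ reps] by simp
  show ?thesis
  proof
    fix x
    show "gamma_at_1 (G Mod H) (coset_act (derived_act G)) YH x
        = (if x \<in> carrier (G Mod H)
           then (if x = H then 1 else 0) - int (card {e \<in> arcs D. H #> \<alpha> e = x}) else 0)"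
    proof (cases "x \<in> carrier (G Mod H)")
      case True
      then obtain c where "c \<in> carrier G" "x = H #> c" by (auto simp: carrier_FactGroup)
      with True show ?thesis using gamma adj_coeff_YH[OF s, of c v v] bouquet by simp
    next
      case False
      moreover have "H \<in> carrier (G Mod H)"
        using coset_mult_one[OF H_subset] by (force simp: carrier_FactGroup)
      ultimately show ?thesis using gamma by (auto simp: adj_coeff_def)
    qed
  qed
qed

end

section \<open>The bouquet over \<open>\<Delta>\<close>\<close>

lemma Delta_simps:
  "carrier (Delta p) = {1..p - 1}" "x \<otimes>\<^bsub>Delta p\<^esub> y = x * y mod p" "\<one>\<^bsub>Delta p\<^esub> = 1"
  by (simp_all add: Delta_def)

lemma mod_in_Delta_iff:
  assumes "p > 1"
  shows "x mod p \<in> carrier (Delta p) \<longleftrightarrow> \<not> p dvd x"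
  using assms by (auto simp: Delta_simps dvd_eq_mod_eq_0 less_Suc_eq_le[symmetric])

lemma comm_group_Delta:
  assumes p: "Factorial_Ring.prime (p::nat)"
  shows "comm_group (Delta p)"
proof (rule comm_groupI)
  have p1: "p > 1" using p prime_gt_1_nat by blast
  have not_dvd: "\<not> p dvd x" if "x \<in> carrier (Delta p)" for x
    using that by (auto simp: Delta_simps dest: dvd_imp_le)
  have mod_id: "x mod p = x" if "x \<in> carrier (Delta p)" for x
    using that p1 by (intro mod_less) (auto simp: Delta_simps)
  show "x \<otimes>\<^bsub>Delta p\<^esub> y \<in> carrier (Delta p)"
    if "x \<in> carrier (Delta p)" "y \<in> carrier (Delta p)" for x y
  proof -
    have "\<not> p dvd x * y" using not_dvd[OF that(1)] not_dvd[OF that(2)] p by (simp add: prime_dvd_mult_iff)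
    then show ?thesis using mod_in_Delta_iff[OF p1] by (simp add: Delta_simps(2))
  qed
  show "\<one>\<^bsub>Delta p\<^esub> \<in> carrier (Delta p)" using p1 by (simp add: Delta_simps)
  show "x \<otimes>\<^bsub>Delta p\<^esub> y \<otimes>\<^bsub>Delta p\<^esub> z = x \<otimes>\<^bsub>Delta p\<^esub> (y \<otimes>\<^bsub>Delta p\<^esub> z)" for x y z
    by (simp add: Delta_simps mod_mult_left_eq mod_mult_right_eq mult.assoc)
  show "x \<otimes>\<^bsub>Delta p\<^esub> y = y \<otimes>\<^bsub>Delta p\<^esub> x" for x y
    by (simp add: Delta_simps mult.commute)
  show "\<one>\<^bsub>Delta p\<^esub> \<otimes>\<^bsub>Delta p\<^esub> x = x" if "x \<in> carrier (Delta p)" for x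
    using mod_id[OF that] by (simp add: Delta_simps)
  show "\<exists>y\<in>carrier (Delta p). y \<otimes>\<^bsub>Delta p\<^esub> x = \<one>\<^bsub>Delta p\<^esub>"
    if x: "x \<in> carrier (Delta p)" for x
  proof -
    have "coprime x p"
      using not_dvd[OF x] p by (simp add: prime_imp_coprime coprime_commute)
    then obtain y where "[x * y = 1] (mod p)" using cong_solve_coprime_nat by auto
    then have inv: "x * (y mod p) mod p = 1" using p1 by (simp add: cong_def mod_mult_right_eq)
    then have "y mod p \<noteq> 0" by (metis mod_0 mult_0_right zero_neq_one)
    then have "\<not> p dvd y" by (simp add: dvd_eq_mod_eq_0)
    then have "y mod p \<in> carrier (Delta p)" using mod_in_Delta_iff[OF p1] by simp
    with inv show ?thesis by (auto simp: Delta_simps mult.commute)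
  qed
qed

context
  fixes p :: nat
  assumes p: "Factorial_Ring.prime p" and odd: "odd p"
begin

private lemma p_gt_2: "p > 2"
  using p odd prime_ge_2_nat by (metis le_neq_implies_less dvd_refl)

lemma jay_mult_Delta:
  assumes "d \<in> carrier (Delta p)"
  shows "jay p \<otimes>\<^bsub>Delta p\<^esub> d = p - d"
proof -
  have d: "1 \<le> d" "d \<le> p - 1" using assms by (auto simp: Delta_simps)
  then have "(p - 1) * d = (p - d) + (d - 1) * p"
    by (simp add: algebra_simps diff_mult_distrib diff_mult_distrib2)
  then have "(p - 1) * d mod p = (p - d) mod p" by (metis mod_mult_self1)
  then show ?thesis using d by (simp add: Delta_simps jay_def)
qed

lemma subgroup_jay: "subgroup {1, jay p} (Delta p)"
proof -
  interpret comm_group "Delta p" by (rule comm_group_Delta[OF p])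
  have j: "jay p \<in> carrier (Delta p)" using p_gt_2 by (simp add: Delta_simps jay_def)
  have jj: "jay p \<otimes>\<^bsub>Delta p\<^esub> jay p = 1" using jay_mult_Delta[OF j] p_gt_2 by (simp add: jay_def)
  then have "inv\<^bsub>Delta p\<^esub> jay p = jay p" using j by (simp add: inv_equality Delta_simps)
  moreover have "inv\<^bsub>Delta p\<^esub> 1 = 1" using inv_one by (simp add: Delta_simps)
  ultimately show ?thesis
    using j jj by (intro subgroupI) (auto simp: Delta_simps)
qed

lemma rcos_jay:
  assumes "x \<in> carrier (Delta p)"
  shows "{1, jay p} #>\<^bsub>Delta p\<^esub> x = {x, p - x}"
  using assms jay_mult_Delta[OF assms] by (auto simp: r_coset_def Delta_simps)

lemma alpha_in_Delta:
  assumes "e \<in> arcs (Xb p)"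
  shows "alpha p e \<in> carrier (Delta p)"
proof -
  interpret comm_group "Delta p" by (rule comm_group_Delta[OF p])
  have "i \<in> carrier (Delta p)" if "Some (i, k) \<in> arcs (Xb p)" for i k
    using that by (auto simp: Xb_def Delta_simps)
  moreover have "1 \<in> carrier (Delta p)" using p_gt_2 by (simp add: Delta_simps)
  ultimately show ?thesis
    using assms by (cases e) (auto simp: alpha_def)
qed

lemma card_loops_in_coset:
  assumes c: "c \<in> carrier (Delta p)"
  defines "H \<equiv> {1, jay p}"
  shows "card {e \<in> arcs (Xb p). H #>\<^bsub>Delta p\<^esub> alpha p e = H #>\<^bsub>Delta p\<^esub> c}
       = (if H #>\<^bsub>Delta p\<^esub> c = H then 1 else 0) + p"
proof -
  interpret comm_group "Delta p" by (rule comm_group_Delta[OF p])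
  define d where "d = inv\<^bsub>Delta p\<^esub> c"
  have d: "d \<in> carrier (Delta p)" using c by (simp add: d_def)
  then have d_bounds: "1 \<le> d" "d < p" using p_gt_2 by (auto simp: Delta_simps)
  have Some_iff: "H #>\<^bsub>Delta p\<^esub> alpha p (Some (i, k)) = H #>\<^bsub>Delta p\<^esub> c \<longleftrightarrow> i \<in> {d, p - d}"
    if i: "i \<in> carrier (Delta p)" for i k
  proof -
    have "alpha p (Some (i, k)) = inv\<^bsub>Delta p\<^esub> i" by (simp add: alpha_def)
    then have "H #>\<^bsub>Delta p\<^esub> alpha p (Some (i, k)) = H #>\<^bsub>Delta p\<^esub> c \<longleftrightarrow> i \<in> H #>\<^bsub>Delta p\<^esub> d"
      unfolding H_def d_def using rcos_inv_eq_iff[OF subgroup_jay i c] by (simp only:)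
    then show ?thesis unfolding H_def rcos_jay[OF d] .
  qed
  have "alpha p None = \<one>\<^bsub>Delta p\<^esub>" by (simp add: alpha_def Delta_simps)
  then have H_None: "H #>\<^bsub>Delta p\<^esub> alpha p None = H"
    unfolding H_def by (simp only: coset_mult_one[OF subgroup.subset[OF subgroup_jay]])
  have None_iff: "H #>\<^bsub>Delta p\<^esub> alpha p None = H #>\<^bsub>Delta p\<^esub> c \<longleftrightarrow> H #>\<^bsub>Delta p\<^esub> c = H"
    unfolding H_None by (rule eq_commute)
  have "{e \<in> arcs (Xb p). H #>\<^bsub>Delta p\<^esub> alpha p e = H #>\<^bsub>Delta p\<^esub> c}
      = (if H #>\<^bsub>Delta p\<^esub> c = H then {None} else {}) \<union> Some ` (SIGMA i:{d, p - d}. {1..i})"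
  proof (rule Set.set_eqI)
    fix e :: "(nat \<times> nat) option"
    show "e \<in> {e \<in> arcs (Xb p). H #>\<^bsub>Delta p\<^esub> alpha p e = H #>\<^bsub>Delta p\<^esub> c}
      \<longleftrightarrow> e \<in> (if H #>\<^bsub>Delta p\<^esub> c = H then {None} else {}) \<union> Some ` (SIGMA i:{d, p - d}. {1..i})"
    proof (cases e)
      case None
      then show ?thesis using None_iff by (simp add: Xb_def)
    next
      case (Some ik)
      obtain i k where ik: "ik = (i, k)" by fastforce
      have "i \<in> {d, p - d} \<Longrightarrow> i \<in> carrier (Delta p)" "i \<in> carrier (Delta p) \<longleftrightarrow> 1 \<le> i \<and> i \<le> p - 1"
        using d_bounds by (auto simp: Delta_simps)
      then show ?thesis using Some_iff[of i k] unfolding Some ik by (auto simp: Xb_def)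
    qed
  qed
  moreover have "card (SIGMA i:{d, p - d}. {1..i}) = p"
  proof -
    have "d \<noteq> p - d" using odd d_bounds by presburger
    then show ?thesis using d_bounds by (subst card_SigmaI) auto
  qed
  ultimately show ?thesis
    by (simp add: card_Un_disjoint card_image)
qed

lemma gamma_at_1_Yplus:
  "gamma_at_1 (Delta_plus p) (Yplus_act p) (Yplus p)
     = (\<lambda>x. if x \<in> carrier (Delta_plus p)
            then (if x = {1, jay p} then 1 else 0)
                 - int (card {e \<in> arcs (Xb p). {1, jay p} #>\<^bsub>Delta p\<^esub> alpha p e = x})
            else 0)"
proof -
  interpret derived_quotient "Delta p" "{1, jay p}" "Xb p" "alpha p"
    using comm_group_Delta[OF p] subgroup_jay alpha_in_Delta
    by (intro derived_quotient.intro derived_quotient_axioms.intro)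
  show ?thesis
    unfolding Delta_plus_def Yplus_act_def Yplus_def Yd_def
    by (rule gamma_at_1_bouquet) (auto simp: Delta_simps Xb_def)
qed

end

theorem proposition5p3:
  fixes p :: nat
  assumes "Factorial_Ring.prime p" and "odd p"
  shows "gamma_at_1 (Delta_plus p) (Yplus_act p) (Yplus p)
           = (\<lambda>x. - int p * norm_elt (Delta_plus p) x)"
proof
  fix x
  show "gamma_at_1 (Delta_plus p) (Yplus_act p) (Yplus p) x = - int p * norm_elt (Delta_plus p) x"
  proof (cases "x \<in> carrier (Delta_plus p)")
    case True
    then obtain c where "c \<in> carrier (Delta p)" "x = {1, jay p} #>\<^bsub>Delta p\<^esub> c"
      by (auto simp: Delta_plus_def carrier_FactGroup)
    with True show ?thesis
      using gamma_at_1_Yplus[OF assms] card_loops_in_coset[OF assms] by (simp add: norm_elt_def)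
  qed (simp add: gamma_at_1_Yplus[OF assms] norm_elt_def)
qed

end
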